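(* Let $L$ be an infinite set and consider the edged cube $\bar Q_L$. For a basic sequence, the following are equivalent: it is convergent over $f_{\mathrm{solved}}$; it is universally convergent; it is twist-finite.
   Context: Let $L$ be an infinite set, $-L=\{-r:r\in L\}$ a disjoint copy of $L$, and $0$ a new element; $L^\dagger=-L\cup\{0\}\cup L$ with $-(-r)=r$, $-0=0$. Adjoin $\pm\infty$ with $-(+\infty)=-\infty$ and set $\bar L^\dagger=L^\dagger\cup\{\pm\infty\}$. Points of $U=(\bar L^\dagger)^3$ have coordinates $x,y,z$. The edged cube $\bar Q_L$ is the set of cells $(p,i)$ with $p\in U$, $i\in\{x,y,z\}$, $p_i\in\{\pm\infty\}$ ($i$ marks the face of the cell). For $i\in\{x,y,z\}$, $\alpha\in\bar L^\dagger$, the quarter-turn twist $T_{i,\alpha}$ is the permutation of cells fixing every cell whose point $p$ has $p_i\ne\alpha$ and acting on the others by the rotation $T_{x,\alpha}(\alpha,y,z)=(\alpha,-z,y)$, $T_{y,\alpha}(x,\alpha,z)=(z,\alpha,-x)$, $T_{z,\alpha}(x,y,\alpha)=(-y,x,\alpha)$, the marked coordinate being carried along by the rotation. Basic twists are $T,T^2,T^3$ for quarter-turn twists $T$. A basic sequence is a sequence $\langle\sigma_\eta:\eta<\theta\rangle$ of basic twists of ordinal length $\theta$; it is twist-finite if each basic twist occurs in it only finitely many times. A labelling is a map $f$ from cells to $X\cup\{\mathrm{NaC}\}$ for a set $X\not\ni\mathrm{NaC}$; it is legal if it never takes value NaC; a configuration is a labelling with $X$ the six colors red, white, green, orange, yellow,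 blue. The solved configuration $f_{\mathrm{solved}}$ colors cell $(p,i)$ red, blue, white, orange, green, yellow according as $p_i=+\infty$ with $i=x,y,z$, or $p_i=-\infty$ with $i=x,y,z$. A twist $\sigma$ acts by $(\sigma f)(c)=f(\sigma^{-1}c)$. Applying $\langle\sigma_\eta:\eta<\theta\rangle$ to $f_0$ produces $f_{\eta+1}=\sigma_\eta f_\eta$, and for limit $\lambda\le\theta$, $f_\lambda(c)$ is the eventually constant value of $f_\eta(c)$ ($\eta<\lambda$) if it exists and NaC otherwise; $f_\theta$ is the terminal labelling. The sequence is convergent over $f_0$ if $f_\theta$ is legal, and universally convergent if it is convergent over the identity labelling (each cell labelled by itself). *)

theory Defs
  imports Main
begin

text \<open>Coordinates in the extended set: Pos r = r, Neg r = -r (r in L), Zero = 0,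
  PInf = +infinity, NInf = -infinity. The set L is the universe of the type 'l.\<close>
datatype 'l coord = Pos 'l | Neg 'l | Zero | PInf | NInf

fun cneg :: "'l coord \<Rightarrow> 'l coord" where
  "cneg (Pos r) = Neg r"
| "cneg (Neg r) = Pos r"
| "cneg Zero = Zero"
| "cneg PInf = NInf"
| "cneg NInf = PInf"

datatype axis = AX | AY | AZ

type_synonym 'l point = "'l coord \<times> 'l coord \<times> 'l coord"
type_synonym 'l cell = "'l point \<times> axis"

definition coord :: "'l point \<Rightarrow> axis \<Rightarrow> 'l coord" where
  "coord p i = (case i of AX \<Rightarrow> fst p | AY \<Rightarrow> fst (snd p) | AZ \<Rightarrow> snd (snd p))"

definition cells :: "'l cell set" where
  "cells = {c. coord (fst c) (snd c) \<in> {PInf, NInf}}"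

fun rot :: "axis \<Rightarrow> 'l point \<Rightarrow> 'l point" where
  "rot AX (a, y, z) = (a, cneg z, y)"
| "rot AY (x, a, z) = (z, a, cneg x)"
| "rot AZ (x, y, a) = (cneg y, x, a)"

text \<open>Where the marked coordinate is carried by the rotation.\<close>
fun rot_axis :: "axis \<Rightarrow> axis \<Rightarrow> axis" where
  "rot_axis AX AX = AX" | "rot_axis AX AY = AZ" | "rot_axis AX AZ = AY"
| "rot_axis AY AX = AZ" | "rot_axis AY AY = AY" | "rot_axis AY AZ = AX"
| "rot_axis AZ AX = AY" | "rot_axis AZ AY = AX" | "rot_axis AZ AZ = AZ"

definition qturn :: "axis \<Rightarrow> 'l coord \<Rightarrow> 'l cell \<Rightarrow> 'l cell" where
  "qturn i \<alpha> c = (if coord (fst c) i = \<alpha> then (rot i (fst c), rot_axis i (snd c)) else c)"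

definition basic_twists :: "('l cell \<Rightarrow> 'l cell) set" where
  "basic_twists = {qturn i \<alpha> ^^ k | i \<alpha> k. k \<in> {1, 2, 3}}"

text \<open>Labellings take values in 'x option; None plays the role of NaC.\<close>
definition act :: "('l cell \<Rightarrow> 'l cell) \<Rightarrow> ('l cell \<Rightarrow> 'x option) \<Rightarrow> ('l cell \<Rightarrow> 'x option)" where
  "act \<sigma> f = (\<lambda>c. f (inv \<sigma> c))"

text \<open>A basic sequence of ordinal length theta is represented by an element theta of a
  well-ordered type 'o together with sigma :: 'o => twist, only the values at eta < theta
  mattering. run sigma f0 eta is the labelling f_eta.\<close>
definition run :: "('o::wellorder \<Rightarrow> 'l cell \<Rightarrow> 'l cell) \<Rightarrow> ('l cell \<Rightarrow> 'x option)
    \<Rightarrow> 'o \<Rightarrow> 'l cell \<Rightarrow> 'x option" where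
  "run \<sigma> f0 = wfrec {(a, b). a < b} (\<lambda>F \<eta>.
     if \<not> (\<exists>\<xi>. \<xi> < \<eta>) then f0
     else if (\<exists>p<\<eta>. \<forall>q<\<eta>. q \<le> p)
       then act (\<sigma> (THE p. p < \<eta> \<and> (\<forall>q<\<eta>. q \<le> p))) (F (THE p. p < \<eta> \<and> (\<forall>q<\<eta>. q \<le> p)))
     else (\<lambda>c. if (\<exists>v. \<exists>\<xi><\<eta>. \<forall>q. \<xi> \<le> q \<and> q < \<eta> \<longrightarrow> F q c = v)
               then (THE v. \<exists>\<xi><\<eta>. \<forall>q. \<xi> \<le> q \<and> q < \<eta> \<longrightarrow> F q c = v)
               else None))"

definition basic_sequence :: "('o::wellorder \<Rightarrow> 'l cell \<Rightarrow> 'l cell) \<Rightarrow> 'o \<Rightarrow> bool" where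
  "basic_sequence \<sigma> \<theta> = (\<forall>\<eta><\<theta>. \<sigma> \<eta> \<in> basic_twists)"

definition twist_finite :: "('o::wellorder \<Rightarrow> 'l cell \<Rightarrow> 'l cell) \<Rightarrow> 'o \<Rightarrow> bool" where
  "twist_finite \<sigma> \<theta> = (\<forall>\<tau>\<in>basic_twists. finite {\<eta>. \<eta> < \<theta> \<and> \<sigma> \<eta> = \<tau>})"

definition convergent_over :: "('o::wellorder \<Rightarrow> 'l cell \<Rightarrow> 'l cell) \<Rightarrow> 'o \<Rightarrow> ('l cell \<Rightarrow> 'x option) \<Rightarrow> bool" where
  "convergent_over \<sigma> \<theta> f0 = (\<forall>c\<in>cells. run \<sigma> f0 \<theta> c \<noteq> None)"

definition universally_convergent :: "('o::wellorder \<Rightarrow> 'l cell \<Rightarrow> 'l cell) \<Rightarrow> 'o \<Rightarrow> bool" where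
  "universally_convergent \<sigma> \<theta> = convergent_over \<sigma> \<theta> (\<lambda>c. Some c)"

datatype color = Red | White | Green | Orange | Yellow | Blue

definition f_solved :: "'l cell \<Rightarrow> color option" where
  "f_solved c = Some (
     let v = coord (fst c) (snd c) in
     if v = PInf then (case snd c of AX \<Rightarrow> Red | AY \<Rightarrow> Blue | AZ \<Rightarrow> White)
     else (case snd c of AX \<Rightarrow> Orange | AY \<Rightarrow> Green | AZ \<Rightarrow> Yellow))"

end

theory Submission
  imports Defs
begin

(* If every basic twist occurs only finitely often, each cell is moved by only finitely many
   terms of the sequence (only the twists of the three slices through a cell move it), so below
   every limit each label is eventually constant and the identity labelling stays legal. A
   universally convergent sequence applied to any legal f0 ends in f0 composed with the terminal
   identity labelling.

   Conversely, let \<tau> = T_{i,\<alpha>}^k occur infinitely often and let l \<le> \<theta> be least with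
   infinitely many occurrences below it; l is a limit. The cells with all coordinates in
   {\<plusminus>\<alpha>, \<plusminus>\<infinity>} form a finite subcube mapped onto itself by every twist, so convergence
   over f_solved forces the labels there to be legal throughout and eventually constant below l.
   Each of these labellings is f_solved \<circ> \<pi> for a map \<pi> sharing the rigidity properties of
   twists, and an occurrence of \<tau> late below l would leave it unchanged. That is impossible:
   \<tau> moves the cubie at the point with i-coordinate \<alpha> and +\<infinity> elsewhere, and a cubie of the
   subcube is located by its colours together with, for the two edge cubies at r and -r which
   share their colours, an orientation weight preserved by all twists. *)

section \<open>Transfinite runs\<close>

definition is_limit :: "'o::wellorder \<Rightarrow> bool" where
  "is_limit \<eta> \<longleftrightarrow> (\<exists>\<xi>. \<xi> < \<eta>) \<and> \<not> (\<exists>p<\<eta>. \<forall>q<\<eta>. q \<le> p)"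

lemma ordinal_cases:
  fixes \<eta> :: "'o::wellorder"
  obtains (zero) "\<not> (\<exists>\<xi>. \<xi> < \<eta>)" | (succ) p where "p < \<eta>" "\<forall>q<\<eta>. q \<le> p" | (limit) "is_limit \<eta>"
  unfolding is_limit_def by blast

lemma limit_above_finite:
  fixes \<eta> :: "'o::wellorder"
  assumes "is_limit \<eta>" "finite M" "\<forall>q\<in>M. q < \<eta>"
  obtains s where "s < \<eta>" "\<forall>q\<in>M. q < s"
proof (cases "M = {}")
  case True
  then show ?thesis using assms(1) that unfolding is_limit_def by blast
next
  case False
  then have "Max M < \<eta>" using assms(2,3) by simp
  then obtain s where "s < \<eta>" "Max M < s" using assms(1) unfolding is_limit_def by (auto simp: not_le)
  then show ?thesis using that assms(2) by (meson Max_ge le_less_trans)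
qed

lemma limit_succ_below:
  fixes \<eta> :: "'o::wellorder"
  assumes "is_limit \<eta>" "q < \<eta>"
  obtains s where "q < s" "s < \<eta>" "\<forall>x<s. x \<le> q"
proof -
  define s where "s = (LEAST x. q < x)"
  have "q < s" unfolding s_def using assms(2) by (rule LeastI)
  moreover have "s \<le> \<eta>" unfolding s_def using assms(2) by (rule Least_le)
  moreover have "\<forall>x<s. x \<le> q" unfolding s_def using not_less_Least not_less by blast
  moreover have "s \<noteq> \<eta>" using assms(1) calculation unfolding is_limit_def by blast
  ultimately show ?thesis using that by simp
qed

lemma least_limit_cofinal:
  fixes \<theta> :: "'o::wellorder"
  assumes "infinite {\<eta>. \<eta> < \<theta> \<and> P \<eta>}"
  obtains l where "l \<le> \<theta>" "is_limit l" "\<forall>\<xi><l. \<exists>q\<in>{\<xi>..<l}. P q"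
proof -
  define occ where "occ x = {\<eta>. \<eta> < x \<and> P \<eta>}" for x
  define l where "l = (LEAST x. infinite (occ x))"
  have inf_\<theta>: "infinite (occ \<theta>)" using assms by (simp add: occ_def)
  have inf_l: "infinite (occ l)" unfolding l_def by (rule LeastI[of _ \<theta>]) (rule inf_\<theta>)
  have fin_below: "finite (occ x)" if "x < l" for x
    using not_less_Least[OF that[unfolded l_def]] by blast
  have "l \<le> \<theta>" unfolding l_def by (rule Least_le) (rule inf_\<theta>)
  moreover have "is_limit l"
    unfolding is_limit_def
  proof
    show "\<exists>\<xi>. \<xi> < l" using inf_l unfolding occ_def by (metis (no_types) empty_Collect_eq finite.emptyI)
    show "\<not> (\<exists>p<l. \<forall>q<l. q \<le> p)"
    proof
      assume "\<exists>p<l. \<forall>q<l. q \<le> p"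
      then obtain p where "p < l" "\<forall>q<l. q \<le> p" by blast
      then have "occ l \<subseteq> insert p (occ p)" unfolding occ_def by (auto simp: order.order_iff_strict)
      then show False using fin_below[OF \<open>p < l\<close>] inf_l by (meson finite_insert finite_subset)
    qed
  qed
  moreover have "\<exists>q\<in>{\<xi>..<l}. P q" if "\<xi> < l" for \<xi>
  proof (rule ccontr)
    assume "\<not> (\<exists>q\<in>{\<xi>..<l}. P q)"
    then have "occ l \<subseteq> occ \<xi>" unfolding occ_def by (auto simp: not_le)
    then show False using fin_below[OF that] inf_l by (meson finite_subset)
  qed
  ultimately show ?thesis using that by blast
qed

lemmas run_unfold = def_wfrec[OF run_def[THEN eq_reflection] wf]

lemma run_zero: "\<not> (\<exists>\<xi>. \<xi> < \<eta>) \<Longrightarrow> run \<sigma> f0 \<eta> = f0"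
  by (subst run_unfold) simp

lemma run_succ:
  assumes "p < \<eta>" "\<forall>q<\<eta>. q \<le> p"
  shows "run \<sigma> f0 \<eta> = act (\<sigma> p) (run \<sigma> f0 p)"
proof -
  have "(THE p. p < \<eta> \<and> (\<forall>q<\<eta>. q \<le> p)) = p"
    using assms by (intro the_equality) (auto intro: order.antisym)
  then show ?thesis using assms by (subst run_unfold) (auto simp: cut_apply)
qed

lemma run_limit_cases:
  assumes "is_limit \<eta>"
  shows "run \<sigma> f0 \<eta> c = (if \<exists>v. \<exists>\<xi><\<eta>. \<forall>q\<in>{\<xi>..<\<eta>}. run \<sigma> f0 q c = v
    then THE v. \<exists>\<xi><\<eta>. \<forall>q\<in>{\<xi>..<\<eta>}. run \<sigma> f0 q c = v else None)"
proof -
  have "\<exists>\<xi>. \<xi> < \<eta>" and no_pred: "\<not> (\<exists>p<\<eta>. \<forall>q<\<eta>. q \<le> p)"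
    using assms unfolding is_limit_def by auto
  then show ?thesis
    by (subst run_unfold) (simp only: not_True_eq_False no_pred if_False simp_thms,
        simp add: cut_apply Ball_def atLeastLessThan_iff, blast)
qed

lemma run_limit:
  assumes "is_limit \<eta>" "\<xi> < \<eta>" "\<forall>q\<in>{\<xi>..<\<eta>}. run \<sigma> f0 q c = v"
  shows "run \<sigma> f0 \<eta> c = v"
proof -
  have "(THE v. \<exists>\<xi><\<eta>. \<forall>q\<in>{\<xi>..<\<eta>}. run \<sigma> f0 q c = v) = v"
  proof (rule the_equality)
    show "\<exists>\<xi><\<eta>. \<forall>q\<in>{\<xi>..<\<eta>}. run \<sigma> f0 q c = v" using assms(2,3) by blast
  next
    fix v' assume "\<exists>\<xi>'<\<eta>. \<forall>q\<in>{\<xi>'..<\<eta>}. run \<sigma> f0 q c = v'"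
    then obtain \<xi>' where "\<xi>' < \<eta>" "\<forall>q\<in>{\<xi>'..<\<eta>}. run \<sigma> f0 q c = v'" by blast
    then show "v' = v" using assms(2,3) by (metis atLeastLessThan_iff max.cobounded1 max.cobounded2 max_less_iff_conj)
  qed
  then show ?thesis using assms by (auto simp: run_limit_cases[OF assms(1)])
qed

lemma run_limit_stable:
  assumes "is_limit \<eta>" "run \<sigma> f0 \<eta> c \<noteq> None"
  obtains \<xi> where "\<xi> < \<eta>" "\<forall>q\<in>{\<xi>..<\<eta>}. run \<sigma> f0 q c = run \<sigma> f0 \<eta> c"
proof -
  obtain v \<xi> where "\<xi> < \<eta>" "\<forall>q\<in>{\<xi>..<\<eta>}. run \<sigma> f0 q c = v"
    using assms run_limit_cases[OF assms(1), of \<sigma> f0 c] by (auto split: if_splits)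
  then show ?thesis using that run_limit[OF assms(1)] by metis
qed

lemma run_limit_stable_on:
  assumes "is_limit \<eta>" "finite S" "\<forall>c\<in>S. run \<sigma> f0 \<eta> c \<noteq> None"
  obtains \<xi> where "\<xi> < \<eta>" "\<forall>c\<in>S. \<forall>q\<in>{\<xi>..<\<eta>}. run \<sigma> f0 q c = run \<sigma> f0 \<eta> c"
proof -
  have "\<forall>c\<in>S. \<exists>\<xi><\<eta>. \<forall>q\<in>{\<xi>..<\<eta>}. run \<sigma> f0 q c = run \<sigma> f0 \<eta> c"
    using run_limit_stable[OF assms(1)] assms(3) by metis
  then obtain \<xi>c where \<xi>c: "\<forall>c\<in>S. \<xi>c c < \<eta> \<and> (\<forall>q\<in>{\<xi>c c..<\<eta>}. run \<sigma> f0 q c = run \<sigma> f0 \<eta> c)"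
    by metis
  obtain \<xi> where "\<xi> < \<eta>" "\<forall>c\<in>S. \<xi>c c < \<xi>"
    using limit_above_finite[OF assms(1), of "\<xi>c ` S"] assms(2) \<xi>c by auto
  then show ?thesis using that \<xi>c by fastforce
qed

lemma act_apply [simp]: "act \<sigma> f c = f (inv \<sigma> c)"
  by (simp add: act_def)

lemma run_stable_limit_twist_invariant:
  assumes "is_limit l" "\<forall>c\<in>S. \<forall>q\<in>{\<xi>..<l}. run \<sigma> f0 q c = run \<sigma> f0 l c" "q \<in> {\<xi>..<l}" "c \<in> S"
  shows "run \<sigma> f0 q (inv (\<sigma> q) c) = run \<sigma> f0 q c"
proof -
  obtain s where s: "q < s" "s < l" "\<forall>x<s. x \<le> q"
    using limit_succ_below[OF assms(1)] assms(3) by auto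
  then have "run \<sigma> f0 q (inv (\<sigma> q) c) = run \<sigma> f0 s c" by (simp add: run_succ)
  also have "\<dots> = run \<sigma> f0 q c" using assms(2-4) s(1,2) by auto
  finally show ?thesis .
qed

lemma run_identity_labelling:
  "run \<sigma> Some \<eta> c = Some d \<Longrightarrow> run \<sigma> f0 \<eta> c = f0 d"
proof (induction \<eta> arbitrary: c d rule: less_induct)
  case (less \<eta>)
  show ?case
  proof (cases \<eta> rule: ordinal_cases)
    case zero
    then show ?thesis using less.prems by (simp add: run_zero)
  next
    case (succ p)
    then show ?thesis using less.prems less.IH[of p] by (simp add: run_succ)
  next
    case limit
    then obtain \<xi> where \<xi>: "\<xi> < \<eta>" "\<forall>q\<in>{\<xi>..<\<eta>}. run \<sigma> Some q c = Some d"
      using run_limit_stable[OF limit, of \<sigma> Some c] less.prems by auto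
    then have "\<forall>q\<in>{\<xi>..<\<eta>}. run \<sigma> f0 q c = f0 d" using less.IH by simp
    then show ?thesis using run_limit[OF limit \<xi>(1)] by blast
  qed
qed

lemma run_fixed_cell:
  assumes "\<xi> \<le> \<eta>" "\<forall>q\<in>{\<xi>..<\<eta>}. inj (\<sigma> q) \<and> \<sigma> q c = c"
  shows "run \<sigma> f0 \<eta> c = run \<sigma> f0 \<xi> c"
  using assms
proof (induction \<eta> rule: less_induct)
  case (less \<eta>)
  show ?case
  proof (cases "\<xi> = \<eta>")
    case False
    then have "\<xi> < \<eta>" using less.prems by simp
    then show ?thesis
    proof (cases \<eta> rule: ordinal_cases)
      case (succ p)
      then have "\<xi> \<le> p" using \<open>\<xi> < \<eta>\<close> by blast
      moreover have "\<forall>q\<in>{\<xi>..<p}. inj (\<sigma> q) \<and> \<sigma> q c = c"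
        using less.prems(2) succ(1) by auto
      ultimately have "run \<sigma> f0 p c = run \<sigma> f0 \<xi> c"
        using less.IH[OF succ(1)] by blast
      moreover have "inv (\<sigma> p) c = c"
        using less.prems(2) succ(1) \<open>\<xi> \<le> p\<close> by (simp add: inv_f_eq)
      ultimately show ?thesis by (simp add: run_succ[OF succ])
    next
      case limit
      have "\<forall>q\<in>{\<xi>..<\<eta>}. run \<sigma> f0 q c = run \<sigma> f0 \<xi> c"
        using less.prems(2) by (auto intro!: less.IH)
      then show ?thesis using run_limit[OF limit \<open>\<xi> < \<eta>\<close>] by blast
    qed blast
  qed simp
qed

lemma run_legal_if_finitely_moved:
  assumes inj: "\<forall>q<\<theta>. inj (\<sigma> q)"
    and fin: "\<And>c. finite {q. q < \<theta> \<and> \<sigma> q c \<noteq> c}"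
    and legal: "\<forall>c. f0 c \<noteq> None"
  shows "\<eta> \<le> \<theta> \<Longrightarrow> run \<sigma> f0 \<eta> c \<noteq> None"
proof (induction \<eta> arbitrary: c rule: less_induct)
  case (less \<eta>)
  show ?case
  proof (cases \<eta> rule: ordinal_cases)
    case zero
    then show ?thesis using legal by (simp only: run_zero[OF zero]) blast
  next
    case (succ p)
    then show ?thesis using less by (simp add: run_succ)
  next
    case limit
    have "{q. q < \<eta> \<and> \<sigma> q c \<noteq> c} \<subseteq> {q. q < \<theta> \<and> \<sigma> q c \<noteq> c}"
      using less.prems by auto
    then have "finite {q. q < \<eta> \<and> \<sigma> q c \<noteq> c}" using fin by (rule finite_subset)
    then obtain s where s: "s < \<eta>" "\<forall>q\<in>{q. q < \<eta> \<and> \<sigma> q c \<noteq> c}. q < s"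
      using limit_above_finite[OF limit] by blast
    have "\<forall>q\<in>{s..<\<eta>}. inj (\<sigma> q) \<and> \<sigma> q c = c"
    proof
      fix q assume "q \<in> {s..<\<eta>}"
      then show "inj (\<sigma> q) \<and> \<sigma> q c = c" using s(2) inj less.prems by force
    qed
    then have "run \<sigma> f0 \<eta> c = run \<sigma> f0 s c"
      using s(1) by (intro run_fixed_cell) simp_all
    also have "\<dots> \<noteq> None" using less.IH s(1) less.prems by simp
    finally show ?thesis .
  qed
qed

lemma run_None_persists:
  assumes fin: "finite S" and invariant: "\<forall>q<\<theta>. inj (\<sigma> q) \<and> \<sigma> q ` S \<subseteq> S"
    and "c \<in> S" "run \<sigma> f0 \<xi> c = None"
  shows "\<xi> \<le> \<eta> \<Longrightarrow> \<eta> \<le> \<theta> \<Longrightarrow> \<exists>d\<in>S. run \<sigma> f0 \<eta> d = None"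
proof (induction \<eta> rule: less_induct)
  case (less \<eta>)
  show ?case
  proof (cases "\<xi> = \<eta>")
    case True
    then show ?thesis using assms(3,4) by blast
  next
    case False
    then have "\<xi> < \<eta>" using less.prems by simp
    then show ?thesis
    proof (cases \<eta> rule: ordinal_cases)
      case (succ p)
      then have p: "\<xi> \<le> p" "p < \<theta>" using \<open>\<xi> < \<eta>\<close> less.prems(2) by auto
      then have "\<exists>d\<in>S. run \<sigma> f0 p d = None" by (intro less.IH[OF succ(1)]) simp_all
      then obtain d where d: "d \<in> S" "run \<sigma> f0 p d = None" by blast
      have "inv (\<sigma> p) (\<sigma> p d) = d" "\<sigma> p d \<in> S"
        using invariant \<open>p < \<theta>\<close> d(1) by (simp_all add: inv_f_f image_subset_iff)
      then have "run \<sigma> f0 \<eta> (\<sigma> p d) = None" using d(2) by (simp add: run_succ[OF succ])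
      then show ?thesis using \<open>\<sigma> p d \<in> S\<close> by blast
    next
      case limit
      show ?thesis
      proof (rule ccontr)
        assume "\<not> (\<exists>d\<in>S. run \<sigma> f0 \<eta> d = None)"
        then have legal: "\<forall>d\<in>S. run \<sigma> f0 \<eta> d \<noteq> None" by simp
        then obtain \<xi>' where \<xi>': "\<xi>' < \<eta>" "\<forall>d\<in>S. \<forall>q\<in>{\<xi>'..<\<eta>}. run \<sigma> f0 q d = run \<sigma> f0 \<eta> d"
          using run_limit_stable_on[OF limit fin, of \<sigma> f0] by blast
        define m where "m = max \<xi> \<xi>'"
        have m: "m < \<eta>" "\<xi> \<le> m" "m \<le> \<theta>" "m \<in> {\<xi>'..<\<eta>}"
          using \<xi>'(1) \<open>\<xi> < \<eta>\<close> less.prems(2) unfolding m_def by auto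
        obtain d where d: "d \<in> S" "run \<sigma> f0 m d = None"
          using less.IH[OF m(1-3)] by blast
        moreover have "run \<sigma> f0 m d = run \<sigma> f0 \<eta> d" using \<xi>'(2) d(1) m(4) by blast
        ultimately show False using legal by metis
      qed
    qed (use \<open>\<xi> < \<eta>\<close> in blast)
  qed
qed

lemma run_as_relabelling:
  assumes fin: "finite S"
    and P_id: "P id" and P_comp: "\<And>\<pi> \<rho>. P \<pi> \<Longrightarrow> P \<rho> \<Longrightarrow> P (\<pi> \<circ> \<rho>)"
    and P_twists: "\<forall>q<\<theta>. P (inv (\<sigma> q))" and P_maps: "\<And>\<pi>. P \<pi> \<Longrightarrow> \<pi> ` S \<subseteq> S"
    and legal: "\<And>\<eta> c. \<eta> \<le> \<theta> \<Longrightarrow> c \<in> S \<Longrightarrow> run \<sigma> f0 \<eta> c \<noteq> None"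
  shows "\<eta> \<le> \<theta> \<Longrightarrow> \<exists>\<pi>. P \<pi> \<and> (\<forall>c\<in>S. run \<sigma> f0 \<eta> c = f0 (\<pi> c))"
proof (induction \<eta> rule: less_induct)
  case (less \<eta>)
  show ?case
  proof (cases \<eta> rule: ordinal_cases)
    case zero
    then have "\<forall>c\<in>S. run \<sigma> f0 \<eta> c = f0 (id c)" by (simp add: run_zero)
    then show ?thesis using P_id by blast
  next
    case (succ p)
    then have "p \<le> \<theta>" "P (inv (\<sigma> p))" using less.prems P_twists by auto
    obtain \<pi> where \<pi>: "P \<pi>" "\<forall>c\<in>S. run \<sigma> f0 p c = f0 (\<pi> c)"
      using less.IH[OF succ(1) \<open>p \<le> \<theta>\<close>] by blast
    have "\<forall>c\<in>S. run \<sigma> f0 \<eta> c = f0 ((\<pi> \<circ> inv (\<sigma> p)) c)"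
      using \<pi>(2) P_maps[OF \<open>P (inv (\<sigma> p))\<close>] by (auto simp: run_succ[OF succ])
    then show ?thesis using P_comp[OF \<pi>(1) \<open>P (inv (\<sigma> p))\<close>] by blast
  next
    case limit
    have "\<forall>c\<in>S. run \<sigma> f0 \<eta> c \<noteq> None" using legal less.prems by blast
    then obtain \<xi> where \<xi>: "\<xi> < \<eta>" "\<forall>c\<in>S. \<forall>q\<in>{\<xi>..<\<eta>}. run \<sigma> f0 q c = run \<sigma> f0 \<eta> c"
      using run_limit_stable_on[OF limit fin] by blast
    have "\<xi> \<le> \<theta>" using \<xi>(1) less.prems by simp
    then obtain \<pi> where \<pi>: "P \<pi>" "\<forall>c\<in>S. run \<sigma> f0 \<xi> c = f0 (\<pi> c)"
      using less.IH[OF \<xi>(1)] by blast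
    have "\<forall>c\<in>S. run \<sigma> f0 \<eta> c = f0 (\<pi> c)" using \<xi> \<pi>(2) by auto
    then show ?thesis using \<pi>(1) by blast
  qed
qed

section \<open>Twists and cube moves\<close>

lemma cneg_cneg [simp]: "cneg (cneg v) = v"
  by (cases v) auto

lemma coord_simps [simp]: "coord (a, b, d) AX = a" "coord (a, b, d) AY = b" "coord (a, b, d) AZ = d"
  by (simp_all add: coord_def)

lemma UNIV_axis: "(UNIV :: axis set) = {AX, AY, AZ}"
  using axis.exhaust by auto

lemma finite_UNIV_axis [simp]: "finite (UNIV :: axis set)"
  by (simp add: UNIV_axis)

lemma axis_cases3: "(a::axis) \<noteq> b \<Longrightarrow> a \<noteq> c \<Longrightarrow> b \<noteq> c \<Longrightarrow> n \<in> {a, b, c}"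
  by (cases a; cases b; cases c; cases n) auto

lemma axis_third_exists: "\<exists>c::axis. c \<noteq> a \<and> c \<noteq> b"
  by (cases a; cases b) (auto intro: exI[of _ AX] exI[of _ AY] exI[of _ AZ])

lemma axis_third_unique: "(a::axis) \<noteq> b \<Longrightarrow> x \<notin> {a, b} \<Longrightarrow> y \<notin> {a, b} \<Longrightarrow> x = y"
  by (cases a; cases b; cases x; cases y) auto

lemma point_eqI: "(\<And>i. coord p i = coord p' i) \<Longrightarrow> p = p'"
  using prod_eqI by (metis coord_simps prod.collapse)

lemma mem_cells_iff: "(p, m) \<in> cells \<longleftrightarrow> coord p m \<in> {PInf, NInf}"
  by (simp add: cells_def)

lemma coord_rot_same [simp]: "coord (rot i p) i = coord p i"
  by (cases p; cases i) auto

lemma rot_eq_iff [simp]: "rot i p = rot i p' \<longleftrightarrow> p = p'"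
  by (cases p; cases p'; cases i) (auto dest: arg_cong[where f = cneg])

lemma rot_axis_eq_iff [simp]: "rot_axis i m = rot_axis i m' \<longleftrightarrow> m = m'"
  by (cases i; cases m; cases m') auto

lemma rot_cells: "(rot i p, rot_axis i m) \<in> cells \<longleftrightarrow> (p, m) \<in> cells"
  by (cases p; cases i; cases m) (auto simp: mem_cells_iff elim: cneg.elims)

lemma coord_rot_in:
  assumes "cneg ` C \<subseteq> C" "\<forall>j. coord p j \<in> C"
  shows "coord (rot i p) j \<in> C"
proof -
  obtain a b d where p: "p = (a, b, d)" by (cases p)
  have "a \<in> C" "b \<in> C" "d \<in> C" using assms(2) coord_simps unfolding p by metis+
  then show ?thesis using assms(1) unfolding p by (cases i; cases j) auto
qed

lemma qturn_pow_four:
  fixes \<alpha> :: "'l coord"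
  shows "qturn i \<alpha> ^^ 4 = id"
proof
  fix c :: "'l cell"
  obtain a b d m where "c = ((a, b, d), m)" by (metis prod.collapse)
  then show "(qturn i \<alpha> ^^ 4) c = id c"
    by (cases i; cases m) (auto simp: qturn_def numeral_eq_Suc)
qed

lemma qturn_pow_inv:
  assumes "k \<le> 4"
  shows "bij (qturn i \<alpha> ^^ k)" "inv (qturn i \<alpha> ^^ k) = qturn i \<alpha> ^^ (4 - k)"
proof -
  have "(qturn i \<alpha> ^^ (4 - k)) \<circ> (qturn i \<alpha> ^^ k) = id" "(qturn i \<alpha> ^^ k) \<circ> (qturn i \<alpha> ^^ (4 - k)) = id"
    using assms qturn_pow_four[of i \<alpha>] by (simp_all flip: funpow_add)
  then show "bij (qturn i \<alpha> ^^ k)" "inv (qturn i \<alpha> ^^ k) = qturn i \<alpha> ^^ (4 - k)"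
    by (auto intro: o_bij inv_unique_comp)
qed

fun is_signed_label :: "'l coord \<Rightarrow> bool" where
  "is_signed_label (Pos _) = True" | "is_signed_label (Neg _) = True" | "is_signed_label _ = False"

fun coord_sign :: "'l coord \<Rightarrow> int" where
  "coord_sign (Pos _) = 1" | "coord_sign (Neg _) = -1" | "coord_sign Zero = 0"
| "coord_sign PInf = 1" | "coord_sign NInf = -1"

fun levi_civita :: "axis \<Rightarrow> axis \<Rightarrow> int" where
  "levi_civita AX AY = 1" | "levi_civita AY AZ = 1" | "levi_civita AZ AX = 1"
| "levi_civita AY AX = -1" | "levi_civita AZ AY = -1" | "levi_civita AX AZ = -1"
| "levi_civita _ _ = 0"

fun edge_point :: "'l point \<Rightarrow> bool" where
  "edge_point (a, b, d) \<longleftrightarrow>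
     is_signed_label a \<and> b \<in> {PInf, NInf} \<and> d \<in> {PInf, NInf}
   \<or> a \<in> {PInf, NInf} \<and> is_signed_label b \<and> d \<in> {PInf, NInf}
   \<or> a \<in> {PInf, NInf} \<and> b \<in> {PInf, NInf} \<and> is_signed_label d"

fun edge_axis :: "'l point \<Rightarrow> axis" where
  "edge_axis (a, b, d) = (if is_signed_label a then AX else if is_signed_label b then AY else AZ)"

(* The edge cubies at r and -r on one edge carry the same colours; this weight tells them apart. *)
fun edge_weight :: "'l cell \<Rightarrow> int" where
  "edge_weight ((a, b, d), m) = coord_sign a * coord_sign b * coord_sign d * levi_civita m (edge_axis (a, b, d))"

definition edge_cells :: "'l cell set" where
  "edge_cells = {c \<in> cells. edge_point (fst c)}"

lemma rot_edge_weight: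
  assumes "edge_point p" "coord p m \<in> {PInf, NInf}"
  shows "edge_point (rot i p) \<and> edge_weight (rot i p, rot_axis i m) = edge_weight (p, m)"
  using assms by (cases p) (auto; cases i; cases m; auto elim!: is_signed_label.elims)

(* For \<alpha> = Pos r this is a 4x4x4 cube (3x3x3 for \<alpha> = Zero) inside the edged cube. *)
definition subcube :: "'l coord \<Rightarrow> 'l cell set" where
  "subcube \<alpha> = {c \<in> cells. \<forall>i. coord (fst c) i \<in> {\<alpha>, cneg \<alpha>, PInf, NInf}}"

definition cube_move :: "('l cell \<Rightarrow> 'l cell) \<Rightarrow> bool" where
  "cube_move \<pi> \<longleftrightarrow> inj \<pi>
     \<and> (\<forall>c c'. fst (\<pi> c) = fst (\<pi> c') \<longleftrightarrow> fst c = fst c')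
     \<and> (\<forall>c. \<pi> c \<in> cells \<longleftrightarrow> c \<in> cells)
     \<and> (\<forall>\<alpha>. \<pi> ` subcube \<alpha> \<subseteq> subcube \<alpha>)
     \<and> (\<forall>c\<in>edge_cells. \<pi> c \<in> edge_cells \<and> edge_weight (\<pi> c) = edge_weight c)"

lemma cube_move_inj: "cube_move \<pi> \<Longrightarrow> inj \<pi>"
  unfolding cube_move_def by (elim conjE)

lemma cube_move_same_point: "cube_move \<pi> \<Longrightarrow> fst (\<pi> c) = fst (\<pi> c') \<longleftrightarrow> fst c = fst c'"
  unfolding cube_move_def by (elim conjE) (simp only:)

lemma cube_move_cells: "cube_move \<pi> \<Longrightarrow> \<pi> c \<in> cells \<longleftrightarrow> c \<in> cells"
  unfolding cube_move_def by (elim conjE) (simp only:)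

lemma cube_move_subcube: "cube_move \<pi> \<Longrightarrow> \<pi> ` subcube \<alpha> \<subseteq> subcube \<alpha>"
  unfolding cube_move_def by (elim conjE) (simp only:)

lemma cube_move_edge_cells:
  "cube_move \<pi> \<Longrightarrow> c \<in> edge_cells \<Longrightarrow> \<pi> c \<in> edge_cells \<and> edge_weight (\<pi> c) = edge_weight c"
  unfolding cube_move_def by (elim conjE) (simp only:)

lemma cube_move_id: "cube_move id"
  by (simp add: cube_move_def)

lemma cube_move_comp:
  assumes "cube_move \<pi>" "cube_move \<rho>"
  shows "cube_move (\<pi> \<circ> \<rho>)"
  unfolding cube_move_def
proof (intro conjI allI impI ballI)
  show "inj (\<pi> \<circ> \<rho>)" using assms by (simp add: cube_move_inj inj_compose)
  show "fst ((\<pi> \<circ> \<rho>) c) = fst ((\<pi> \<circ> \<rho>) c') \<longleftrightarrow> fst c = fst c'" for c c'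
    using assms by (simp add: cube_move_same_point)
  show "(\<pi> \<circ> \<rho>) c \<in> cells \<longleftrightarrow> c \<in> cells" for c
    using assms by (simp add: cube_move_cells)
  show "(\<pi> \<circ> \<rho>) ` subcube \<alpha> \<subseteq> subcube \<alpha>" for \<alpha>
    unfolding image_comp[symmetric]
    using image_mono[OF cube_move_subcube[OF assms(2)], of \<pi>] cube_move_subcube[OF assms(1), of \<alpha>]
    by (rule order.trans)
  show "(\<pi> \<circ> \<rho>) c \<in> edge_cells" "edge_weight ((\<pi> \<circ> \<rho>) c) = edge_weight c" if "c \<in> edge_cells" for c
    using that cube_move_edge_cells[OF assms(1)] cube_move_edge_cells[OF assms(2)] by simp_all
qed

lemma qturn_same_point: "fst (qturn i \<alpha> c) = fst (qturn i \<alpha> c') \<longleftrightarrow> fst c = fst c'"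
proof -
  have "rot i p \<noteq> p'" "p' \<noteq> rot i p" "p \<noteq> p'" "p' \<noteq> p"
    if "coord p i = \<alpha>" "coord p' i \<noteq> \<alpha>" for p p'
    using that by (metis coord_rot_same)+
  then show ?thesis
    by (cases "coord (fst c) i = \<alpha>"; cases "coord (fst c') i = \<alpha>") (simp_all add: qturn_def)
qed

lemma cube_move_qturn:
  fixes \<alpha> :: "'l coord"
  shows "cube_move (qturn i \<alpha>)"
  unfolding cube_move_def
proof (intro conjI allI impI ballI)
  show "inj (qturn i \<alpha>)"
  proof (rule injI)
    fix c c' assume eq: "qturn i \<alpha> c = qturn i \<alpha> c'"
    then have "fst c = fst c'" using qturn_same_point by metis
    with eq show "c = c'" by (cases c; cases c') (auto simp: qturn_def split: if_splits)
  qed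
  show "fst (qturn i \<alpha> c) = fst (qturn i \<alpha> c') \<longleftrightarrow> fst c = fst c'" for c c' :: "'l cell"
    by (rule qturn_same_point)
  show "qturn i \<alpha> c \<in> cells \<longleftrightarrow> c \<in> cells" for c :: "'l cell"
    using rot_cells[of i "fst c" "snd c"] by (simp add: qturn_def)
  show "qturn i \<alpha> ` subcube \<beta> \<subseteq> subcube \<beta>" for \<beta>
  proof
    fix d assume "d \<in> qturn i \<alpha> ` subcube \<beta>"
    then obtain c where c: "c \<in> subcube \<beta>" "d = qturn i \<alpha> c" by blast
    have "cneg ` {\<beta>, cneg \<beta>, PInf, NInf} \<subseteq> {\<beta>, cneg \<beta>, PInf, NInf}" by auto
    then have "coord (rot i (fst c)) j \<in> {\<beta>, cneg \<beta>, PInf, NInf}" for j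
      using coord_rot_in c(1) unfolding subcube_def by blast
    then show "d \<in> subcube \<beta>"
      using c rot_cells[of i "fst c" "snd c"] by (simp add: subcube_def qturn_def)
  qed
  fix c :: "'l cell" assume c: "c \<in> edge_cells"
  obtain p m where pm: "c = (p, m)" by fastforce
  have "edge_point p" "coord p m \<in> {PInf, NInf}" using c by (simp_all add: pm edge_cells_def cells_def)
  then have "(rot i p, rot_axis i m) \<in> edge_cells \<and> edge_weight (rot i p, rot_axis i m) = edge_weight (p, m)"
    using rot_edge_weight[of p m i] rot_cells[of i p m] by (simp add: edge_cells_def mem_cells_iff)
  then show "qturn i \<alpha> c \<in> edge_cells" "edge_weight (qturn i \<alpha> c) = edge_weight c"
    using c by (simp_all add: pm qturn_def)
qed

lemma cube_move_qturn_pow: "cube_move (qturn i \<alpha> ^^ k)"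
  by (induction k) (simp_all only: funpow.simps cube_move_id cube_move_comp cube_move_qturn)

lemma basic_twist_cube_move:
  assumes "\<tau> \<in> basic_twists"
  shows "bij \<tau>" "cube_move \<tau>" "cube_move (inv \<tau>)"
proof -
  obtain i \<alpha> k where \<tau>: "\<tau> = qturn i \<alpha> ^^ k" and "k \<in> {1, 2, 3}"
    using assms unfolding basic_twists_def by blast
  then have k: "k \<le> 4" by auto
  show "bij \<tau>" unfolding \<tau> by (rule qturn_pow_inv(1)[OF k])
  show "cube_move \<tau>" unfolding \<tau> by (rule cube_move_qturn_pow)
  show "cube_move (inv \<tau>)" unfolding \<tau> qturn_pow_inv(2)[OF k] by (rule cube_move_qturn_pow)
qed

section \<open>Colourings of the subcube\<close>

lemma f_solved_eq_cellsD:
  assumes "coord Q n \<in> {PInf, NInf}" "coord Q' n' \<in> {PInf, NInf}" "f_solved (Q, n) = f_solved (Q', n')"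
  shows "n = n' \<and> coord Q n' = coord Q' n'"
  using assms by (cases n; cases n'; auto simp: f_solved_def)

lemma edge_pointI:
  assumes "m1 \<noteq> m2" "m3 \<notin> {m1, m2}" "coord p m1 \<in> {PInf, NInf}" "coord p m2 \<in> {PInf, NInf}"
    "is_signed_label (coord p m3)"
  shows "edge_point p"
  using assms by (cases p; cases m1; cases m2; cases m3) auto

lemma edge_weight_flip:
  assumes "n1 \<noteq> n2" "n3 \<notin> {n1, n2}" "coord Q n1 \<in> {PInf, NInf}" "coord Q n2 \<in> {PInf, NInf}"
    "coord Q' n1 = coord Q n1" "coord Q' n2 = coord Q n2"
    "is_signed_label (coord Q n3)" "coord Q' n3 = cneg (coord Q n3)"
  shows "edge_weight (Q', n1) \<noteq> edge_weight (Q, n1)"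
  using assms by (cases Q; cases Q'; cases n1; cases n2; cases n3; auto elim!: is_signed_label.elims)

lemma subcube_point_eq:
  assumes n: "n1 \<noteq> n2" "n3 \<notin> {n1, n2}"
    and inf: "coord Q n1 \<in> {PInf, NInf}" "coord Q n2 \<in> {PInf, NInf}"
    and agree: "coord Q' n1 = coord Q n1" "coord Q' n2 = coord Q n2"
    and slice: "coord Q n3 \<in> {\<alpha>, cneg \<alpha>}" "coord Q' n3 \<in> {\<alpha>, cneg \<alpha>}" "coord Q n3 \<notin> {PInf, NInf}"
    and weight: "is_signed_label (coord Q n3) \<Longrightarrow> edge_weight (Q', n1) = edge_weight (Q, n1)"
  shows "Q' = Q"
proof (cases "coord Q' n3 = coord Q n3")
  case True
  then have "coord Q' n = coord Q n" for n
    using axis_cases3[of n1 n2 n3 n] n agree by auto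
  then show ?thesis by (rule point_eqI)
next
  case False
  then have "coord Q' n3 = cneg (coord Q n3)" "is_signed_label (coord Q n3)"
    using slice by (cases \<alpha>; auto)+
  then show ?thesis using edge_weight_flip[OF n inf agree] weight by blast
qed

lemma slice_value_signed:
  "x \<in> {\<alpha>, cneg \<alpha>} \<Longrightarrow> y \<in> {\<alpha>, cneg \<alpha>} \<Longrightarrow> is_signed_label x \<Longrightarrow> is_signed_label y"
  by (cases \<alpha>) auto

lemma cube_move_cubie:
  assumes "cube_move \<pi>"
  shows "\<pi> (p, m) = (fst (\<pi> (p, m')), snd (\<pi> (p, m)))" "inj (\<lambda>m. snd (\<pi> (p, m)))"
proof -
  show "\<pi> (p, m) = (fst (\<pi> (p, m')), snd (\<pi> (p, m)))"
    using cube_move_same_point[OF assms, of "(p, m)" "(p, m')"] by (simp add: prod_eq_iff)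
  show "inj (\<lambda>m. snd (\<pi> (p, m)))"
  proof (rule injI)
    fix m m'' assume "snd (\<pi> (p, m)) = snd (\<pi> (p, m''))"
    then have "\<pi> (p, m) = \<pi> (p, m'')" using cube_move_same_point[OF assms] by (simp add: prod_eq_iff)
    then show "m = m''" using cube_move_inj[OF assms] by (simp add: inj_eq)
  qed
qed

lemma inj_axis_eq_third:
  assumes "inj (A :: axis \<Rightarrow> axis)" "inj A'" "m1 \<noteq> m2" "m3 \<notin> {m1, m2}" "A' m1 = A m1" "A' m2 = A m2"
  shows "A' m3 = A m3"
proof (rule axis_third_unique)
  show "A m1 \<noteq> A m2" "A' m3 \<notin> {A m1, A m2}" "A m3 \<notin> {A m1, A m2}"
    using injD[OF assms(1), of m1 m2] injD[OF assms(1), of m3] injD[OF assms(2), of m3] assms(3-6)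
    by auto
qed

lemma same_colours_same_sticker:
  assumes "cube_move \<pi>" "cube_move \<pi>'" "c \<in> cells" "f_solved (\<pi>' c) = f_solved (\<pi> c)"
  shows "snd (\<pi>' c) = snd (\<pi> c) \<and> coord (fst (\<pi>' c)) (snd (\<pi> c)) = coord (fst (\<pi> c)) (snd (\<pi> c))"
proof -
  obtain Q n Q' n' where "\<pi> c = (Q, n)" "\<pi>' c = (Q', n')" by fastforce
  moreover have "\<pi> c \<in> cells" "\<pi>' c \<in> cells" using assms cube_move_cells by blast+
  ultimately show ?thesis using f_solved_eq_cellsD[of Q' n' Q n] assms(4) by (simp add: mem_cells_iff)
qed

lemma same_colours_same_point:
  fixes \<pi> \<pi>' :: "'l cell \<Rightarrow> 'l cell"
  assumes \<pi>: "cube_move \<pi>" and \<pi>': "cube_move \<pi>'"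
    and cells: "m1 \<noteq> m2" "(p, m1) \<in> subcube \<alpha>" "(p, m2) \<in> cells"
    and colours: "\<And>m. (p, m) \<in> cells \<Longrightarrow> f_solved (\<pi>' (p, m)) = f_solved (\<pi> (p, m))"
  shows "fst (\<pi>' (p, m1)) = fst (\<pi> (p, m1))"
proof -
  define Q A Q' A' where "Q = fst (\<pi> (p, m1))" and "A = (\<lambda>m. snd (\<pi> (p, m)))"
    and "Q' = fst (\<pi>' (p, m1))" and "A' = (\<lambda>m. snd (\<pi>' (p, m)))"
  note defs = this
  have A: "inj A" and A': "inj A'" and \<pi>_p: "\<pi> (p, m) = (Q, A m)" and \<pi>'_p: "\<pi>' (p, m) = (Q', A' m)" for m
    unfolding defs by (rule cube_move_cubie[OF \<pi>] cube_move_cubie[OF \<pi>'])+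
  have "(p, m1) \<in> cells" using cells(2) by (simp add: subcube_def)
  have Q_cells: "coord Q (A m) \<in> {PInf, NInf} \<longleftrightarrow> (p, m) \<in> cells"
    and Q'_cells: "coord Q' (A' m) \<in> {PInf, NInf} \<longleftrightarrow> (p, m) \<in> cells" for m
    using cube_move_cells[OF \<pi>, of "(p, m)"] cube_move_cells[OF \<pi>', of "(p, m)"]
    by (simp_all add: \<pi>_p \<pi>'_p mem_cells_iff)
  have agree: "A' m = A m \<and> coord Q' (A m) = coord Q (A m)" if "(p, m) \<in> cells" for m
    using same_colours_same_sticker[OF \<pi> \<pi>' that colours[OF that]] by (simp add: \<pi>_p \<pi>'_p)
  note agree1 = agree[OF \<open>(p, m1) \<in> cells\<close>] and agree2 = agree[OF cells(3)]
  obtain m3 where m3: "m3 \<notin> {m1, m2}" using axis_third_exists by blast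
  have A12: "A m1 \<noteq> A m2" and A3: "A m3 \<notin> {A m1, A m2}"
    using injD[OF A, of m1 m2] injD[OF A, of m3 m1] injD[OF A, of m3 m2] cells(1) m3 by auto
  have A'3: "A' m3 = A m3" using inj_axis_eq_third[OF A A' cells(1) m3] agree1 agree2 by blast
  have "Q' = Q"
  proof (cases "(p, m3) \<in> cells")
    case True
    then have "coord Q' n = coord Q n" for n
      using axis_cases3[of "A m1" "A m2" "A m3" n] A12 A3 agree1 agree2 agree by auto
    then show ?thesis by (rule point_eqI)
  next
    case False
    have "\<pi> (p, m1) \<in> subcube \<alpha>" "\<pi>' (p, m1) \<in> subcube \<alpha>"
      using cube_move_subcube[OF \<pi>] cube_move_subcube[OF \<pi>'] cells(2) by blast+
    then have slice: "coord Q (A m3) \<in> {\<alpha>, cneg \<alpha>}" "coord Q' (A m3) \<in> {\<alpha>, cneg \<alpha>}"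
        "coord Q (A m3) \<notin> {PInf, NInf}" and "coord p m3 \<in> {\<alpha>, cneg \<alpha>}"
      using cells(2) False Q_cells[of m3] Q'_cells[of m3] A'3
      by (auto simp: subcube_def \<pi>_p \<pi>'_p mem_cells_iff)
    have weight: "edge_weight (Q', A m1) = edge_weight (Q, A m1)" if "is_signed_label (coord Q (A m3))"
    proof -
      have "is_signed_label (coord p m3)"
        using slice_value_signed[OF slice(1) \<open>coord p m3 \<in> _\<close> that] .
      then have "edge_point p"
        using edge_pointI[OF cells(1) m3] \<open>(p, m1) \<in> cells\<close> cells(3) by (simp add: mem_cells_iff)
      then have "(p, m1) \<in> edge_cells" using \<open>(p, m1) \<in> cells\<close> by (simp add: edge_cells_def)
      then show ?thesis using cube_move_edge_cells[OF \<pi>] cube_move_edge_cells[OF \<pi>'] agree1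
        by (metis \<pi>_p \<pi>'_p)
    qed
    have "coord Q (A m1) \<in> {PInf, NInf}" "coord Q (A m2) \<in> {PInf, NInf}"
      using Q_cells \<open>(p, m1) \<in> cells\<close> cells(3) by blast+
    from subcube_point_eq[OF A12 A3 this agree1[THEN conjunct2] agree2[THEN conjunct2] slice weight]
    show ?thesis .
  qed
  then show ?thesis by (simp add: \<pi>_p \<pi>'_p)
qed

lemma finite_subcube: "finite (subcube \<alpha>)"
proof (rule finite_subset)
  let ?C = "{\<alpha>, cneg \<alpha>, PInf, NInf}"
  show "subcube \<alpha> \<subseteq> (?C \<times> ?C \<times> ?C) \<times> UNIV"
  proof
    fix c assume c: "c \<in> subcube \<alpha>"
    obtain a b d m where c_eq: "c = ((a, b, d), m)" by (metis prod.collapse)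
    have "\<forall>i. coord (a, b, d) i \<in> ?C" using c unfolding c_eq subcube_def by simp
    then have "a \<in> ?C" "b \<in> ?C" "d \<in> ?C" by (metis coord_simps)+
    then show "c \<in> (?C \<times> ?C \<times> ?C) \<times> UNIV" unfolding c_eq by blast
  qed
  show "finite ((?C \<times> ?C \<times> ?C) \<times> (UNIV :: axis set))" by simp
qed

fun slice_point :: "axis \<Rightarrow> 'l coord \<Rightarrow> 'l point" where
  "slice_point AX \<alpha> = (\<alpha>, PInf, PInf)"
| "slice_point AY \<alpha> = (PInf, \<alpha>, PInf)"
| "slice_point AZ \<alpha> = (PInf, PInf, \<alpha>)"

lemma slice_point_cells: "\<exists>m1 m2. m1 \<noteq> m2 \<and> (slice_point i \<alpha>, m1) \<in> cells \<and> (slice_point i \<alpha>, m2) \<in> cells"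
proof (cases i)
  case AX then show ?thesis by (intro exI[of _ AY] exI[of _ AZ]) (simp add: mem_cells_iff)
next
  case AY then show ?thesis by (intro exI[of _ AZ] exI[of _ AX]) (simp add: mem_cells_iff)
next
  case AZ then show ?thesis by (intro exI[of _ AX] exI[of _ AY]) (simp add: mem_cells_iff)
qed

lemma slice_point_subcube: "(slice_point i \<alpha>, m) \<in> cells \<Longrightarrow> (slice_point i \<alpha>, m) \<in> subcube \<alpha>"
  by (cases i) (auto simp: subcube_def coord_def split: axis.splits)

lemma qturn_pow_moves_slice_point:
  "j \<in> {1, 2, 3} \<Longrightarrow> fst ((qturn i \<alpha> ^^ j) (slice_point i \<alpha>, m)) \<noteq> slice_point i \<alpha>"
  by (cases i; cases m) (auto simp: qturn_def numeral_eq_Suc)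

lemma qturn_pow_changes_colouring:
  assumes \<pi>: "cube_move \<pi>" and j: "j \<in> {1, 2, 3}"
  shows "\<exists>c\<in>subcube \<alpha>. f_solved (\<pi> ((qturn i \<alpha> ^^ j) c)) \<noteq> f_solved (\<pi> c)"
proof (rule ccontr)
  define p where "p = slice_point i \<alpha>"
  assume "\<not> ?thesis"
  then have colours: "f_solved ((\<pi> \<circ> qturn i \<alpha> ^^ j) (p, m)) = f_solved (\<pi> (p, m))" if "(p, m) \<in> cells" for m
    using that slice_point_subcube unfolding p_def by fastforce
  obtain m1 m2 where m12: "m1 \<noteq> m2" "(p, m1) \<in> cells" "(p, m2) \<in> cells"
    using slice_point_cells unfolding p_def by blast
  have "(p, m1) \<in> subcube \<alpha>" using m12(2) slice_point_subcube unfolding p_def by blast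
  then have "fst ((\<pi> \<circ> qturn i \<alpha> ^^ j) (p, m1)) = fst (\<pi> (p, m1))"
    using same_colours_same_point[OF \<pi> cube_move_comp[OF \<pi> cube_move_qturn_pow] m12(1) _ m12(3) colours]
    by blast
  then have "fst ((qturn i \<alpha> ^^ j) (p, m1)) = p"
    using cube_move_same_point[OF \<pi>] by simp
  then show False using qturn_pow_moves_slice_point[OF j] unfolding p_def by blast
qed

section \<open>Twist-finiteness\<close>

lemma finite_basic_twists_moving: "finite {\<tau> \<in> basic_twists. \<tau> c \<noteq> c}"
proof (rule finite_subset)
  show "{\<tau> \<in> basic_twists. \<tau> c \<noteq> c} \<subseteq> (\<lambda>(i, k). qturn i (coord (fst c) i) ^^ k) ` (UNIV \<times> {1, 2, 3})"
  proof
    fix \<tau> assume "\<tau> \<in> {\<tau> \<in> basic_twists. \<tau> c \<noteq> c}"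
    then obtain i \<alpha> k where \<tau>: "\<tau> = qturn i \<alpha> ^^ k" "k \<in> {1, 2, 3}" "\<tau> c \<noteq> c"
      unfolding basic_twists_def by blast
    have "qturn i \<alpha> c \<noteq> c"
    proof
      assume "qturn i \<alpha> c = c"
      then have "(qturn i \<alpha> ^^ n) c = c" for n by (induction n) simp_all
      then show False using \<tau>(1,3) by simp
    qed
    then have "\<alpha> = coord (fst c) i" by (auto simp: qturn_def split: if_splits)
    then show "\<tau> \<in> (\<lambda>(i, k). qturn i (coord (fst c) i) ^^ k) ` (UNIV \<times> {1, 2, 3})"
      using \<tau>(1,2) by force
  qed
qed simp

lemma twist_finite_moves_finitely:
  assumes "basic_sequence \<sigma> \<theta>" "twist_finite \<sigma> \<theta>"
  shows "finite {q. q < \<theta> \<and> \<sigma> q c \<noteq> c}"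
proof (rule finite_subset)
  show "{q. q < \<theta> \<and> \<sigma> q c \<noteq> c} \<subseteq> (\<Union>\<tau>\<in>{\<tau> \<in> basic_twists. \<tau> c \<noteq> c}. {q. q < \<theta> \<and> \<sigma> q = \<tau>})"
    using assms(1) unfolding basic_sequence_def by blast
  show "finite (\<Union>\<tau>\<in>{\<tau> \<in> basic_twists. \<tau> c \<noteq> c}. {q. q < \<theta> \<and> \<sigma> q = \<tau>})"
    using finite_basic_twists_moving assms(2) unfolding twist_finite_def by blast
qed

lemma subcube_legal_if_convergent_solved:
  assumes "basic_sequence \<sigma> \<theta>" "convergent_over \<sigma> \<theta> f_solved" "\<eta> \<le> \<theta>" "c \<in> subcube \<alpha>"
  shows "run \<sigma> f_solved \<eta> c \<noteq> None"
proof
  have "\<forall>q<\<theta>. inj (\<sigma> q) \<and> \<sigma> q ` subcube \<alpha> \<subseteq> subcube \<alpha>"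
    using assms(1) basic_twist_cube_move(2) cube_move_inj cube_move_subcube
    unfolding basic_sequence_def by blast
  moreover assume "run \<sigma> f_solved \<eta> c = None"
  ultimately have "\<exists>d\<in>subcube \<alpha>. run \<sigma> f_solved \<theta> d = None"
    using run_None_persists[OF finite_subcube _ assms(4)] assms(3) by blast
  then show False using assms(2) unfolding convergent_over_def subcube_def by blast
qed

lemma twist_finite_if_convergent_solved:
  assumes bs: "basic_sequence \<sigma> \<theta>" and conv: "convergent_over \<sigma> \<theta> f_solved"
  shows "twist_finite \<sigma> \<theta>"
proof (rule ccontr)
  assume "\<not> twist_finite \<sigma> \<theta>"
  then obtain \<tau> where "\<tau> \<in> basic_twists" and inf: "infinite {\<eta>. \<eta> < \<theta> \<and> \<sigma> \<eta> = \<tau>}"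
    unfolding twist_finite_def by blast
  then obtain i \<alpha> k where \<tau>: "\<tau> = qturn i \<alpha> ^^ k" and k: "k \<in> {1, 2, 3}"
    unfolding basic_twists_def by blast
  obtain l where l: "l \<le> \<theta>" "is_limit l" and cofinal: "\<forall>\<xi><l. \<exists>q\<in>{\<xi>..<l}. \<sigma> q = \<tau>"
    by (rule least_limit_cofinal[OF inf])
  note legal = subcube_legal_if_convergent_solved[OF bs conv, where \<alpha> = \<alpha>]
  have "\<forall>c\<in>subcube \<alpha>. run \<sigma> f_solved l c \<noteq> None" using legal l(1) by blast
  then obtain \<xi> where "\<xi> < l"
    and stable: "\<forall>c\<in>subcube \<alpha>. \<forall>q\<in>{\<xi>..<l}. run \<sigma> f_solved q c = run \<sigma> f_solved l c"
    by (rule run_limit_stable_on[OF l(2) finite_subcube])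
  obtain q where q: "q \<in> {\<xi>..<l}" "\<sigma> q = \<tau>" using cofinal \<open>\<xi> < l\<close> by blast
  have "q \<le> \<theta>" "\<forall>q<\<theta>. cube_move (inv (\<sigma> q))"
    using q(1) l(1) bs basic_twist_cube_move(3) unfolding basic_sequence_def by auto
  then obtain \<pi> where "cube_move \<pi>" and \<pi>: "\<forall>c\<in>subcube \<alpha>. run \<sigma> f_solved q c = f_solved (\<pi> c)"
    using run_as_relabelling[where P = cube_move, OF finite_subcube cube_move_id cube_move_comp _
        cube_move_subcube legal] by blast
  have "k \<le> 4" "4 - k \<in> {1, 2, 3}" using k by auto
  have "inv \<tau> = qturn i \<alpha> ^^ (4 - k)" unfolding \<tau> by (rule qturn_pow_inv(2)[OF \<open>k \<le> 4\<close>])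
  then obtain c where "c \<in> subcube \<alpha>" and "f_solved (\<pi> (inv \<tau> c)) \<noteq> f_solved (\<pi> c)"
    using qturn_pow_changes_colouring[OF \<open>cube_move \<pi>\<close> \<open>4 - k \<in> {1, 2, 3}\<close>, where i = i and \<alpha> = \<alpha>]
    by auto
  moreover have "inv \<tau> c \<in> subcube \<alpha>"
    using cube_move_subcube basic_twist_cube_move(3)[OF \<open>\<tau> \<in> basic_twists\<close>] \<open>c \<in> subcube \<alpha>\<close> by blast
  ultimately show False
    using run_stable_limit_twist_invariant[OF l(2) stable q(1) \<open>c \<in> subcube \<alpha>\<close>] \<pi> q(2) by simp
qed

lemma convergent_over_if_universally_convergent:
  fixes \<sigma> :: "'o::wellorder \<Rightarrow> 'l cell \<Rightarrow> 'l cell"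
  assumes "universally_convergent \<sigma> \<theta>" "\<forall>c. f0 c \<noteq> None"
  shows "convergent_over \<sigma> \<theta> f0"
  unfolding convergent_over_def
proof
  fix c :: "'l cell" assume "c \<in> cells"
  then obtain d where "run \<sigma> Some \<theta> c = Some d"
    using assms(1) unfolding universally_convergent_def convergent_over_def by blast
  then have "run \<sigma> f0 \<theta> c = f0 d" by (rule run_identity_labelling)
  then show "run \<sigma> f0 \<theta> c \<noteq> None" using assms(2) by metis
qed

lemma universally_convergent_if_twist_finite:
  assumes "basic_sequence \<sigma> \<theta>" "twist_finite \<sigma> \<theta>"
  shows "universally_convergent \<sigma> \<theta>"
proof -
  have "\<forall>q<\<theta>. inj (\<sigma> q)"
    using assms(1) basic_twist_cube_move(1) bij_is_inj unfolding basic_sequence_def by blast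
  then have "run \<sigma> Some \<theta> c \<noteq> None" for c
    by (rule run_legal_if_finitely_moved[OF _ twist_finite_moves_finitely[OF assms]]) simp_all
  then show ?thesis unfolding universally_convergent_def convergent_over_def by blast
qed

theorem lemma4p2:
  fixes \<sigma> :: "'o::wellorder \<Rightarrow> 'l cell \<Rightarrow> 'l cell" and \<theta> :: 'o
  assumes "infinite (UNIV :: 'l set)"
    and "basic_sequence \<sigma> \<theta>"
  shows "(convergent_over \<sigma> \<theta> f_solved \<longleftrightarrow> universally_convergent \<sigma> \<theta>)
       \<and> (universally_convergent \<sigma> \<theta> \<longleftrightarrow> twist_finite \<sigma> \<theta>)"
proof -
  have "\<forall>c. f_solved c \<noteq> None" by (simp add: f_solved_def)
  then show ?thesis
    using twist_finite_if_convergent_solved[OF assms(2)] universally_convergent_if_twist_finite[OF assms(2)]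
      convergent_over_if_universally_convergent[of \<sigma> \<theta> f_solved] by blast
qed

end
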